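(* Let $H$ and $E$ be Hilbert spaces, let $T:H\to H$ be a bounded linear operator with $\ker T=\{0\}$, and let $\gamma:E\to H$ be a bounded linear operator with $\ker\gamma=\{0\}$ and $\mathcal{R}(T)\cap\mathcal{R}(\gamma)=\{0\}$. Define linear maps $A:\mathcal{D}(A)\to H$ and $\Gamma_0:\mathcal{D}(A)\to E$ on $\mathcal{D}(A)=\mathcal{R}(T)\dot+\mathcal{R}(\gamma)$ by $A(Tf+\gamma\varphi)=f$ and $\Gamma_0(Tf+\gamma\varphi)=\varphi$ for $f\in H$, $\varphi\in E$. If $\lambda\in\mathbb{C}$ is such that $I-\lambda T$ is boundedly invertible in $H$, then for every $f\in H$ and $\varphi\in E$ the problem of finding $u\in\mathcal{D}(A)$ with \[(A-\lambda I)u=f,\qquad \Gamma_0u=\varphi\] has a unique solution, namely \[u=T(I-\lambda T)^{-1}f+(I-\lambda T)^{-1}\gamma\varphi .\]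
   Context: $\mathcal{R}(\cdot)$ denotes the range of an operator and $\dot+$ a direct sum of linear subspaces; $A$ and $\Gamma_0$ are well defined by the stated injectivity and trivial-intersection assumptions. *)

theory Defs
  imports "HOL-Analysis.Analysis"
begin

class complex_vector = real_vector +
  fixes scaleC :: "complex \<Rightarrow> 'a \<Rightarrow> 'a" (infixr \<open>*\<^sub>C\<close> 75)
  assumes scaleC_add_right: "scaleC a (x + y) = scaleC a x + scaleC a y"
    and scaleC_add_left: "scaleC (a + b) x = scaleC a x + scaleC b x"
    and scaleC_scaleC: "scaleC a (scaleC b x) = scaleC (a * b) x"
    and scaleC_one: "scaleC 1 x = x"
    and scaleR_scaleC: "scaleR r x = scaleC (complex_of_real r) x"

class complex_hilbert = complex_vector + real_normed_vector + complete_space +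
  fixes cinner :: "'a \<Rightarrow> 'a \<Rightarrow> complex"
  assumes cinner_commute: "cinner x y = cnj (cinner y x)"
    and cinner_add_left: "cinner (x + y) z = cinner x z + cinner y z"
    and cinner_scaleC_left: "cinner (scaleC a x) y = cnj a * cinner x y"
    and cinner_ge_zero: "Im (cinner x x) = 0 \<and> Re (cinner x x) \<ge> 0"
    and cinner_eq_zero_iff: "cinner x x = 0 \<longleftrightarrow> x = 0"
    and norm_eq_sqrt_cinner: "norm x = sqrt (Re (cinner x x))"

definition clinear :: "('a::complex_vector \<Rightarrow> 'b::complex_vector) \<Rightarrow> bool" where
  "clinear f \<longleftrightarrow> (\<forall>x y. f (x + y) = f x + f y) \<and> (\<forall>c x. f (scaleC c x) = scaleC c (f x))"

definition bounded_clinear ::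
  "('a::{complex_vector,real_normed_vector} \<Rightarrow> 'b::{complex_vector,real_normed_vector}) \<Rightarrow> bool" where
  "bounded_clinear f \<longleftrightarrow> clinear f \<and> (\<exists>K. \<forall>x. norm (f x) \<le> norm x * K)"

definition domA :: "('h \<Rightarrow> 'h::complex_vector) \<Rightarrow> ('e \<Rightarrow> 'h) \<Rightarrow> 'h set" where
  "domA T \<gamma> = {T f + \<gamma> \<phi> | f \<phi>. True}"

definition opA :: "('h \<Rightarrow> 'h::complex_vector) \<Rightarrow> ('e \<Rightarrow> 'h) \<Rightarrow> 'h \<Rightarrow> 'h" where
  "opA T \<gamma> u = (THE f. \<exists>\<phi>. u = T f + \<gamma> \<phi>)"

definition Gamma0 :: "('h \<Rightarrow> 'h::complex_vector) \<Rightarrow> ('e \<Rightarrow> 'h) \<Rightarrow> 'h \<Rightarrow> 'e" where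
  "Gamma0 T \<gamma> u = (THE \<phi>. \<exists>f. u = T f + \<gamma> \<phi>)"

end

theory Submission
  imports Defs
begin

(* Every u in D(A) is uniquely T g + \<gamma> p, and then A u = g, \<Gamma>_0 u = p.  Hence
   (A - \<lambda>) u = f, \<Gamma>_0 u = \<phi> says p = \<phi> and (I - \<lambda>T) g = f + \<lambda>\<gamma>\<phi>, so g = R (f + \<lambda>\<gamma>\<phi>)
   with R = (I - \<lambda>T)^-1, and T g + \<gamma>\<phi> = T R f + R \<gamma>\<phi> because R x = T (\<lambda> R x) + x. *)

lemma scaleC_zero_right: "c *\<^sub>C (0::'a::complex_vector) = 0"
  using scaleC_add_right[of c "0::'a" 0] by simp

lemma scaleC_diff_right: "c *\<^sub>C (x - y) = c *\<^sub>C x - c *\<^sub>C (y::'a::complex_vector)"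
  using scaleC_add_right[of c "x - y" y] by (simp add: algebra_simps)

lemma clinear_add: "clinear f \<Longrightarrow> f (x + y) = f x + f y"
  unfolding clinear_def by blast

lemma clinear_scaleC: "clinear f \<Longrightarrow> f (c *\<^sub>C x) = c *\<^sub>C f x"
  unfolding clinear_def by blast

lemma clinear_diff: "clinear f \<Longrightarrow> f (x - y) = f x - f y"
  unfolding clinear_def by (metis add_diff_cancel diff_add_cancel eq_diff_eq)

lemma bounded_clinear_clinear: "bounded_clinear f \<Longrightarrow> clinear f"
  unfolding bounded_clinear_def by blast

locale direct_sum_of_ranges =
  fixes T :: "'h::complex_vector \<Rightarrow> 'h" and \<gamma> :: "'e::complex_vector \<Rightarrow> 'h"
  assumes clinear_T: "clinear T"
    and clinear_\<gamma>: "clinear \<gamma>"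
    and T_ker: "{x. T x = 0} = {0}"
    and \<gamma>_ker: "{x. \<gamma> x = 0} = {0}"
    and ranges_inter: "range T \<inter> range \<gamma> = {0}"
begin

lemma decomposition_unique:
  assumes "T f + \<gamma> p = T f' + \<gamma> p'"
  shows "f = f' \<and> p = p'"
proof -
  have eq: "T (f - f') = \<gamma> (p' - p)"
    using assms clinear_diff[OF clinear_T, of f f'] clinear_diff[OF clinear_\<gamma>, of p' p]
    by (metis add_diff_cancel_left' add_diff_eq diff_add_eq diff_diff_eq2)
  then have "T (f - f') \<in> range T \<inter> range \<gamma>"
    by (metis IntI rangeI)
  then have zero: "T (f - f') = 0"
    using ranges_inter by auto
  then have "f - f' = 0"
    using T_ker by blast
  moreover have "p' - p = 0"
    using zero eq \<gamma>_ker by (metis (mono_tags, lifting) mem_Collect_eq singletonD)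
  ultimately show ?thesis
    by simp
qed

lemma opA_decomposition [simp]: "opA T \<gamma> (T g + \<gamma> p) = g"
  unfolding opA_def by (rule the_equality) (auto dest: decomposition_unique)

lemma Gamma0_decomposition [simp]: "Gamma0 T \<gamma> (T g + \<gamma> p) = p"
  unfolding Gamma0_def by (rule the_equality) (auto dest: decomposition_unique)

lemma resolvent_eq_T_plus_id:
  assumes "\<And>x. R x - l *\<^sub>C T (R x) = x"
  shows "R x = T (l *\<^sub>C R x) + x"
  using assms[of x] clinear_scaleC[OF clinear_T] by (simp add: algebra_simps)

lemma resolvent_formula_solves:
  assumes R_right: "\<And>x. R x - l *\<^sub>C T (R x) = x"
  shows "T (R f) + R (\<gamma> \<phi>) \<in> domA T \<gamma>
    \<and> opA T \<gamma> (T (R f) + R (\<gamma> \<phi>)) - l *\<^sub>C (T (R f) + R (\<gamma> \<phi>)) = f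
    \<and> Gamma0 T \<gamma> (T (R f) + R (\<gamma> \<phi>)) = \<phi>"
proof -
  define g where "g = R f + l *\<^sub>C R (\<gamma> \<phi>)"
  have "T g + \<gamma> \<phi> = T (R f) + (T (l *\<^sub>C R (\<gamma> \<phi>)) + \<gamma> \<phi>)"
    unfolding g_def using clinear_add[OF clinear_T] by (simp add: algebra_simps)
  also have "\<dots> = T (R f) + R (\<gamma> \<phi>)"
    using resolvent_eq_T_plus_id[OF R_right] by simp
  finally have u_decomp: "T (R f) + R (\<gamma> \<phi>) = T g + \<gamma> \<phi>" ..
  have "g - l *\<^sub>C (T g + \<gamma> \<phi>)
      = (R f - l *\<^sub>C T (R f)) + l *\<^sub>C (R (\<gamma> \<phi>) - l *\<^sub>C T (R (\<gamma> \<phi>)) - \<gamma> \<phi>)"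
    unfolding g_def using clinear_add[OF clinear_T] clinear_scaleC[OF clinear_T]
    by (simp add: scaleC_add_right scaleC_diff_right scaleC_scaleC algebra_simps)
  also have "\<dots> = f"
    using R_right[of f] R_right[of "\<gamma> \<phi>"] by (simp add: scaleC_zero_right)
  finally show ?thesis
    unfolding u_decomp domA_def by auto
qed

lemma resolvent_formula_unique:
  assumes "clinear R"
    and R_left: "\<And>x. R (x - l *\<^sub>C T x) = x"
    and R_right: "\<And>x. R x - l *\<^sub>C T (R x) = x"
    and u: "u \<in> domA T \<gamma>" "opA T \<gamma> u - l *\<^sub>C u = f" "Gamma0 T \<gamma> u = \<phi>"
  shows "u = T (R f) + R (\<gamma> \<phi>)"
proof -
  obtain h p where u_decomp: "u = T h + \<gamma> p"
    using u(1) unfolding domA_def by blast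
  then have p: "p = \<phi>"
    using u(3) by simp
  then have "h - l *\<^sub>C (T h + \<gamma> \<phi>) = f"
    using u(2) u_decomp by simp
  then have "h - l *\<^sub>C T h = f + l *\<^sub>C \<gamma> \<phi>"
    by (simp add: scaleC_add_right algebra_simps)
  then have "h = R (f + l *\<^sub>C \<gamma> \<phi>)"
    using R_left[of h] by simp
  also have "\<dots> = R f + l *\<^sub>C R (\<gamma> \<phi>)"
    using clinear_add[OF \<open>clinear R\<close>] clinear_scaleC[OF \<open>clinear R\<close>] by simp
  finally have h: "h = R f + l *\<^sub>C R (\<gamma> \<phi>)" .
  have "u = T (R f) + (T (l *\<^sub>C R (\<gamma> \<phi>)) + \<gamma> \<phi>)"
    unfolding u_decomp p h using clinear_add[OF clinear_T] by (simp add: algebra_simps)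
  also have "T (l *\<^sub>C R (\<gamma> \<phi>)) + \<gamma> \<phi> = R (\<gamma> \<phi>)"
    using resolvent_eq_T_plus_id[OF R_right] by simp
  finally show ?thesis .
qed

end

theorem theorem1:
  fixes T :: "'h::complex_hilbert \<Rightarrow> 'h"
    and \<gamma> :: "'e::complex_hilbert \<Rightarrow> 'h"
    and l :: complex
    and R :: "'h \<Rightarrow> 'h"
  assumes T_bdd: "bounded_clinear T"
    and T_ker: "{x. T x = 0} = {0}"
    and \<gamma>_bdd: "bounded_clinear \<gamma>"
    and \<gamma>_ker: "{x. \<gamma> x = 0} = {0}"
    and ran_int: "range T \<inter> range \<gamma> = {0}"
    and R_bdd: "bounded_clinear R"
    and R_left: "\<And>x. R (x - l *\<^sub>C T x) = x"
    and R_right: "\<And>x. R x - l *\<^sub>C T (R x) = x"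
  shows "\<forall>f \<phi>.
           (\<exists>!u. u \<in> domA T \<gamma> \<and> opA T \<gamma> u - l *\<^sub>C u = f \<and> Gamma0 T \<gamma> u = \<phi>)
         \<and> (let u = T (R f) + R (\<gamma> \<phi>) in
              u \<in> domA T \<gamma> \<and> opA T \<gamma> u - l *\<^sub>C u = f \<and> Gamma0 T \<gamma> u = \<phi>)"
proof (intro allI conjI)
  fix f \<phi>
  interpret direct_sum_of_ranges T \<gamma>
    using T_bdd \<gamma>_bdd T_ker \<gamma>_ker ran_int
    by (simp add: direct_sum_of_ranges_def bounded_clinear_clinear)
  note solves = resolvent_formula_solves[of R l, OF R_right]
  note unique = resolvent_formula_unique[OF bounded_clinear_clinear[OF R_bdd] R_left R_right]
  show "\<exists>!u. u \<in> domA T \<gamma> \<and> opA T \<gamma> u - l *\<^sub>C u = f \<and> Gamma0 T \<gamma> u = \<phi>"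
    by (rule ex1I[of _ "T (R f) + R (\<gamma> \<phi>)"]) (use solves unique in auto)
  show "let u = T (R f) + R (\<gamma> \<phi>) in
          u \<in> domA T \<gamma> \<and> opA T \<gamma> u - l *\<^sub>C u = f \<and> Gamma0 T \<gamma> u = \<phi>"
    unfolding Let_def by (rule solves)
qed

end
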